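(* Let $\tau$ be any substitution. Then (i) no two different basic generators for $\tau$ are G related, and (ii) every generator for $\tau$ is G related to a unique basic generator.
   Context: Let $\mathcal{A}$ be a finite nonempty alphabet, $\mathcal{A}^*$ the finite words over $\mathcal{A}$ (including the empty word), $\mathcal{A}^+$ the nonempty words, $|u|$ the length of $u$. A word $u$ is a factor of $v$ if $v=w_1uw_2$ for some words $w_1,w_2$. A substitution is a map $\tau:\mathcal{A}\to\mathcal{A}^+$ extended to a concatenation-respecting map on words. The language $\mathcal{L}(\tau)$ is the set of words that are factors of $\tau^n(a)$ for some letter $a$ and some $n\ge1$. A generator for $\tau$ is a triple $(v,u,w)$ with $v,u,w\in\mathcal{A}^+$, $u\in\mathcal{L}(\tau)$ and $\tau(u)=vuw$; $v$, $u$, $w$ are its left wing, center and right wing, and its length is $|u|$. If $(v,u,cw)$ is a generator with $c\in\mathcal{A}$, $w\in\mathcal{A}^*$, its right extension is the generator $(v,uc,w\tau(c))$; if $(vc,u,w)$ is a generator with $c\in\mathcal{A}$, $v\in\mathcal{A}^*$, its left extension is the generator $(\tau(c)v,cu,w)$. Two generators $g_1,g_2$ are G related ($g_1\sim_G g_2$) if there is a generator $g_3$ obtainable from $g_1$ and also from $g_2$ by finite (possibly empty) sequences of left and right extensions. A generator is basic if it is not G related to any generator of smaller length. *)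

theory Defs
  imports Main
begin

definition is_substitution :: "('a \<Rightarrow> 'a list) \<Rightarrow> bool" where
  "is_substitution \<tau> \<longleftrightarrow> (\<forall>a. \<tau> a \<noteq> [])"

definition subst_word :: "('a \<Rightarrow> 'a list) \<Rightarrow> 'a list \<Rightarrow> 'a list" where
  "subst_word \<tau> w = concat (map \<tau> w)"

definition is_factor :: "'a list \<Rightarrow> 'a list \<Rightarrow> bool" where
  "is_factor u v \<longleftrightarrow> (\<exists>w1 w2. v = w1 @ u @ w2)"

definition lang :: "('a \<Rightarrow> 'a list) \<Rightarrow> 'a list set" where
  "lang \<tau> = {u. \<exists>a n. n \<ge> 1 \<and> is_factor u ((subst_word \<tau> ^^ n) [a])}"

definition generator :: "('a \<Rightarrow> 'a list) \<Rightarrow> 'a list \<times> 'a list \<times> 'a list \<Rightarrow> bool" where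
  "generator \<tau> g \<longleftrightarrow> (case g of (v, u, w) \<Rightarrow>
     v \<noteq> [] \<and> u \<noteq> [] \<and> w \<noteq> [] \<and> u \<in> lang \<tau> \<and> subst_word \<tau> u = v @ u @ w)"

definition gen_length :: "'a list \<times> 'a list \<times> 'a list \<Rightarrow> nat" where
  "gen_length g = length (fst (snd g))"

definition ext_step :: "('a \<Rightarrow> 'a list) \<Rightarrow> 'a list \<times> 'a list \<times> 'a list
    \<Rightarrow> 'a list \<times> 'a list \<times> 'a list \<Rightarrow> bool" where
  "ext_step \<tau> g h \<longleftrightarrow> generator \<tau> g \<and>
     ((\<exists>v u c w. g = (v, u, c # w) \<and> h = (v, u @ [c], w @ \<tau> c)) \<or>
      (\<exists>v u c w. g = (v @ [c], u, w) \<and> h = (\<tau> c @ v, c # u, w)))"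

definition G_related :: "('a \<Rightarrow> 'a list) \<Rightarrow> 'a list \<times> 'a list \<times> 'a list
    \<Rightarrow> 'a list \<times> 'a list \<times> 'a list \<Rightarrow> bool" where
  "G_related \<tau> g1 g2 \<longleftrightarrow> generator \<tau> g1 \<and> generator \<tau> g2 \<and>
     (\<exists>g3. (ext_step \<tau>)\<^sup>*\<^sup>* g1 g3 \<and> (ext_step \<tau>)\<^sup>*\<^sup>* g2 g3)"

definition basic :: "('a \<Rightarrow> 'a list) \<Rightarrow> 'a list \<times> 'a list \<times> 'a list \<Rightarrow> bool" where
  "basic \<tau> g \<longleftrightarrow> generator \<tau> g \<and>
     \<not> (\<exists>h. G_related \<tau> g h \<and> gen_length h < gen_length g)"

end

theory Submission
  imports Defs
begin

(* Right and left extension commute and are injective on generators, so g1 and g2 are G related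
   iff L^i R^j g1 = L^k R^l g2 for some i, j, k, l. Hence G relatedness is an equivalence relation
   on generators, and a generator of least length in a class is basic. Two basic generators b1, b2
   of one class have equal length, and cancelling common extensions reduces their relation to
   L^m b1 = R^m b2. Comparing centres: the centre of b2 cannot lie inside the m letters added to
   the left of the centre of b1, because tau does not shorten words; so the centres overlap in a
   nonempty word z, which is the centre of a generator from which b1 arises by m right extensions.
   Minimality of b1 forces m = 0, i.e. b1 = b2. *)

lemma subst_word_simps [simp]:
  "subst_word \<tau> [] = []"
  "subst_word \<tau> (c # s) = \<tau> c @ subst_word \<tau> s"
  "subst_word \<tau> (s @ t) = subst_word \<tau> s @ subst_word \<tau> t"
  by (simp_all add: subst_word_def)

lemma length_subst_word_ge:
  assumes "is_substitution \<tau>"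
  shows "length s \<le> length (subst_word \<tau> s)"
proof (induction s)
  case (Cons c s)
  have "0 < length (\<tau> c)"
    using assms by (simp add: is_substitution_def)
  with Cons.IH show ?case
    by (simp del: length_greater_0_conv)
qed simp

lemma lang_factor_closed:
  assumes "u \<in> lang \<tau>" "is_factor z u"
  shows "z \<in> lang \<tau>"
proof -
  obtain a n w1 w2 x1 x2 where "n \<ge> 1" "(subst_word \<tau> ^^ n) [a] = w1 @ u @ w2" "u = x1 @ z @ x2"
    using assms unfolding lang_def is_factor_def by blast
  then have "n \<ge> 1 \<and> (subst_word \<tau> ^^ n) [a] = (w1 @ x1) @ z @ (x2 @ w2)"
    by simp
  then show ?thesis
    unfolding lang_def is_factor_def by blast
qed

lemma lang_subst_word_closed:
  assumes "u \<in> lang \<tau>"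
  shows "subst_word \<tau> u \<in> lang \<tau>"
proof -
  obtain a n w1 w2 where "n \<ge> 1" "(subst_word \<tau> ^^ n) [a] = w1 @ u @ w2"
    using assms unfolding lang_def is_factor_def by blast
  then have "Suc n \<ge> 1 \<and>
      (subst_word \<tau> ^^ Suc n) [a] = subst_word \<tau> w1 @ subst_word \<tau> u @ subst_word \<tau> w2"
    by simp
  then show ?thesis
    unfolding lang_def is_factor_def by blast
qed

lemma lang_factor_of_subst_word:
  assumes "u \<in> lang \<tau>" "subst_word \<tau> u = x @ z @ y"
  shows "z \<in> lang \<tau>"
  using assms lang_factor_closed lang_subst_word_closed unfolding is_factor_def by metis

lemma generatorE:
  assumes "generator \<tau> g"
  obtains v d u c w where "g = (v @ [d], u, c # w)"
proof -
  obtain v u w where "g = (v, u, w)" "v \<noteq> []" "w \<noteq> []"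
    using assms by (cases g) (auto simp: generator_def)
  then show ?thesis
    using that by (metis append_butlast_last_id neq_Nil_conv)
qed

type_synonym 'a word_triple = "'a list \<times> 'a list \<times> 'a list"

text \<open>Total versions of the two extension steps; they agree with \<^const>\<open>ext_step\<close> on
  generators, whose wings are nonempty.\<close>

definition right_ext :: "('a \<Rightarrow> 'a list) \<Rightarrow> 'a word_triple \<Rightarrow> 'a word_triple"
  where "right_ext \<tau> = (\<lambda>(v, u, w). (v, u @ [hd w], tl w @ \<tau> (hd w)))"

definition left_ext :: "('a \<Rightarrow> 'a list) \<Rightarrow> 'a word_triple \<Rightarrow> 'a word_triple"
  where "left_ext \<tau> = (\<lambda>(v, u, w). (\<tau> (last v) @ butlast v, last v # u, w))"

lemma right_ext_Cons [simp]: "right_ext \<tau> (v, u, c # w) = (v, u @ [c], w @ \<tau> c)"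
  by (simp add: right_ext_def)

lemma left_ext_snoc [simp]: "left_ext \<tau> (v @ [c], u, w) = (\<tau> c @ v, c # u, w)"
  by (simp add: left_ext_def)

lemma left_right_ext_commute: "left_ext \<tau> (right_ext \<tau> g) = right_ext \<tau> (left_ext \<tau> g)"
  by (cases g) (simp add: left_ext_def right_ext_def)

lemma generator_right_ext:
  assumes "is_substitution \<tau>" "generator \<tau> g"
  shows "generator \<tau> (right_ext \<tau> g)"
proof -
  obtain v d u c w where g: "g = (v @ [d], u, c # w)"
    using assms(2) by (rule generatorE)
  with assms(2) have "u \<in> lang \<tau>" "subst_word \<tau> u = (v @ [d]) @ (u @ [c]) @ w"
    by (simp_all add: generator_def)
  then have "u @ [c] \<in> lang \<tau>"
    by (rule lang_factor_of_subst_word)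
  with assms g show ?thesis
    by (auto simp: generator_def is_substitution_def)
qed

lemma generator_left_ext:
  assumes "is_substitution \<tau>" "generator \<tau> g"
  shows "generator \<tau> (left_ext \<tau> g)"
proof -
  obtain v d u c w where g: "g = (v @ [d], u, c # w)"
    using assms(2) by (rule generatorE)
  with assms(2) have "u \<in> lang \<tau>" "subst_word \<tau> u = v @ (d # u) @ c # w"
    by (simp_all add: generator_def)
  then have "d # u \<in> lang \<tau>"
    by (rule lang_factor_of_subst_word)
  with assms g show ?thesis
    by (auto simp: generator_def is_substitution_def)
qed

lemma ext_step_iff:
  "ext_step \<tau> g h \<longleftrightarrow> generator \<tau> g \<and> (h = right_ext \<tau> g \<or> h = left_ext \<tau> g)"
proof (cases "generator \<tau> g")
  case True
  then obtain v d u c w where "g = (v @ [d], u, c # w)"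
    by (rule generatorE)
  with True show ?thesis
    unfolding ext_step_def by auto
qed (simp add: ext_step_def)

lemma funpow_commute_apply:
  assumes "\<And>x. f (g x) = g (f x)"
  shows "(f ^^ i) ((g ^^ j) x) = (g ^^ j) ((f ^^ i) x)"
proof -
  have "f ((g ^^ j) x) = (g ^^ j) (f x)" for x
    by (induction j) (simp_all add: assms)
  then show ?thesis
    by (induction i) simp_all
qed

lemma funpow_image_subset: "f ` A \<subseteq> A \<Longrightarrow> (f ^^ n) ` A \<subseteq> A"
  by (induction n) auto

lemma inj_on_funpow:
  assumes "inj_on f A" "f ` A \<subseteq> A"
  shows "inj_on (f ^^ n) A"
proof (induction n)
  case (Suc n)
  have "(f ^^ n) ` A \<subseteq> A"
    using assms(2) by (rule funpow_image_subset)
  then have "inj_on f ((f ^^ n) ` A)"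
    by (rule inj_on_subset[OF assms(1)])
  with Suc.IH have "inj_on (f \<circ> f ^^ n) A"
    by (rule comp_inj_on)
  then show ?case
    by (simp only: funpow.simps)
qed simp

definition extend :: "('a \<Rightarrow> 'a list) \<Rightarrow> nat \<Rightarrow> nat \<Rightarrow> 'a word_triple \<Rightarrow> 'a word_triple"
  where "extend \<tau> i j = left_ext \<tau> ^^ i \<circ> right_ext \<tau> ^^ j"

lemma extend_0_0 [simp]: "extend \<tau> 0 0 g = g"
  by (simp add: extend_def)

lemma extend_Suc_left: "extend \<tau> (Suc i) j g = left_ext \<tau> (extend \<tau> i j g)"
  by (simp add: extend_def)

lemma extend_Suc_right: "extend \<tau> i (Suc j) g = right_ext \<tau> (extend \<tau> i j g)"
  using funpow_commute_apply[of "left_ext \<tau>" "right_ext \<tau>" i 1]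
  by (simp add: extend_def left_right_ext_commute)

lemma extend_extend: "extend \<tau> i j (extend \<tau> k l g) = extend \<tau> (i + k) (j + l) g"
  using funpow_commute_apply[of "right_ext \<tau>" "left_ext \<tau>" j k]
  by (simp add: extend_def funpow_add left_right_ext_commute)

lemma generator_extend:
  assumes "is_substitution \<tau>" "generator \<tau> g"
  shows "generator \<tau> (extend \<tau> i j g)"
proof (induction i)
  case 0
  show ?case
    by (induction j) (simp_all add: extend_Suc_right generator_right_ext assms)
qed (simp add: extend_Suc_left generator_left_ext assms)

lemma gen_length_extend: "gen_length (extend \<tau> i j g) = i + j + gen_length g"
proof -
  have "gen_length (right_ext \<tau> h) = Suc (gen_length h)"
    "gen_length (left_ext \<tau> h) = Suc (gen_length h)" for h
    by (cases h; simp add: right_ext_def left_ext_def gen_length_def)+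
  then show ?thesis
    by (induction i; induction j) (simp_all add: extend_Suc_left extend_Suc_right)
qed

lemma inj_on_extend:
  assumes "is_substitution \<tau>"
  shows "inj_on (extend \<tau> i j) {g. generator \<tau> g}"
proof -
  have "inj_on (right_ext \<tau>) {g. generator \<tau> g}"
    by (rule inj_onI) (auto elim!: generatorE)
  moreover have "inj_on (left_ext \<tau>) {g. generator \<tau> g}"
    by (rule inj_onI) (auto elim!: generatorE)
  moreover have "right_ext \<tau> ` {g. generator \<tau> g} \<subseteq> {g. generator \<tau> g}"
    "left_ext \<tau> ` {g. generator \<tau> g} \<subseteq> {g. generator \<tau> g}"
    using assms generator_right_ext generator_left_ext by blast+
  ultimately show ?thesis
    unfolding extend_def
    by (intro comp_inj_on inj_on_funpow inj_on_subset[OF _ funpow_image_subset])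
qed

lemma extend_cancel:
  assumes "is_substitution \<tau>" "generator \<tau> g1" "generator \<tau> g2"
    and "extend \<tau> (i + k) (j + l) g1 = extend \<tau> (i' + k) (j' + l) g2"
  shows "extend \<tau> i j g1 = extend \<tau> i' j' g2"
proof -
  have "extend \<tau> k l (extend \<tau> i j g1) = extend \<tau> k l (extend \<tau> i' j' g2)"
    using assms(4) by (simp add: extend_extend add.commute)
  moreover have "extend \<tau> i j g1 \<in> {g. generator \<tau> g}" "extend \<tau> i' j' g2 \<in> {g. generator \<tau> g}"
    using generator_extend[OF assms(1)] assms(2,3) by blast+
  ultimately show ?thesis
    by (rule inj_onD[OF inj_on_extend[OF assms(1)]])
qed

lemma rtranclp_ext_step_iff_extend:
  assumes "is_substitution \<tau>" "generator \<tau> g"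
  shows "(ext_step \<tau>)\<^sup>*\<^sup>* g h \<longleftrightarrow> (\<exists>i j. h = extend \<tau> i j g)"
proof
  assume "(ext_step \<tau>)\<^sup>*\<^sup>* g h"
  then show "\<exists>i j. h = extend \<tau> i j g"
  proof induction
    case base
    show ?case
      by (metis extend_0_0)
  next
    case (step h h')
    then show ?case
      by (metis ext_step_iff extend_Suc_left extend_Suc_right)
  qed
next
  have "(ext_step \<tau>)\<^sup>*\<^sup>* g (extend \<tau> i j g)" for i j
  proof (induction i)
    case 0
    show ?case
    proof (induction j)
      case (Suc j)
      then show ?case
        by (simp add: extend_Suc_right ext_step_iff generator_extend assms rtranclp.rtrancl_into_rtrancl)
    qed simp
  next
    case (Suc i)
    then show ?case
      by (simp add: extend_Suc_left ext_step_iff generator_extend assms rtranclp.rtrancl_into_rtrancl)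
  qed
  then show "\<exists>i j. h = extend \<tau> i j g \<Longrightarrow> (ext_step \<tau>)\<^sup>*\<^sup>* g h"
    by blast
qed

lemma G_related_iff_extend:
  assumes "is_substitution \<tau>"
  shows "G_related \<tau> g1 g2 \<longleftrightarrow>
    generator \<tau> g1 \<and> generator \<tau> g2 \<and> (\<exists>i j k l. extend \<tau> i j g1 = extend \<tau> k l g2)"
  unfolding G_related_def using rtranclp_ext_step_iff_extend[OF assms] by metis

lemma G_related_refl: "generator \<tau> g \<Longrightarrow> G_related \<tau> g g"
  unfolding G_related_def by blast

lemma G_related_sym: "G_related \<tau> g1 g2 \<Longrightarrow> G_related \<tau> g2 g1"
  unfolding G_related_def by blast

lemma G_related_trans:
  assumes "is_substitution \<tau>" "G_related \<tau> g1 g2" "G_related \<tau> g2 g3"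
  shows "G_related \<tau> g1 g3"
proof -
  obtain i j k l a b c d where
    "extend \<tau> i j g1 = extend \<tau> k l g2" "extend \<tau> a b g2 = extend \<tau> c d g3"
    using assms by (auto simp: G_related_iff_extend)
  then have "extend \<tau> (a + i) (b + j) g1 = extend \<tau> (k + c) (l + d) g3"
    by (metis extend_extend add.commute)
  with assms show ?thesis
    unfolding G_related_iff_extend[OF assms(1)] by blast
qed

lemma left_ext_funpow_shape:
  assumes "is_substitution \<tau>" "generator \<tau> (v, u, w)"
  shows "\<exists>V x. (left_ext \<tau> ^^ m) (v, u, w) = (V, x @ u, w) \<and>
    subst_word \<tau> x @ v = V @ x \<and> length x = m"
proof (induction m)
  case (Suc m)
  then obtain V x where IH: "(left_ext \<tau> ^^ m) (v, u, w) = (V, x @ u, w)"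
    "subst_word \<tau> x @ v = V @ x" "length x = m"
    by blast
  have "generator \<tau> (V, x @ u, w)"
    using generator_extend[OF assms, of m 0] IH(1) by (simp add: extend_def)
  then obtain V' d where "V = V' @ [d]"
    by (auto elim: generatorE)
  with IH have "(left_ext \<tau> ^^ Suc m) (v, u, w) = (\<tau> d @ V', (d # x) @ u, w) \<and>
      subst_word \<tau> (d # x) @ v = (\<tau> d @ V') @ (d # x) \<and> length (d # x) = Suc m"
    by simp
  then show ?case
    by blast
qed simp

lemma right_ext_funpow_shape:
  "\<exists>y W. (right_ext \<tau> ^^ m) (v, u, w) = (v, u @ y, W) \<and> length y = m"
proof (induction m)
  case (Suc m)
  then obtain y W where "(right_ext \<tau> ^^ m) (v, u, w) = (v, u @ y, W)" "length y = m"
    by blast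
  then have "(right_ext \<tau> ^^ Suc m) (v, u, w) = (v, u @ (y @ [hd W]), tl W @ \<tau> (hd W)) \<and>
      length (y @ [hd W]) = Suc m"
    by (simp add: right_ext_def)
  then show ?case
    by blast
qed simp

lemma right_ext_funpow_reaches:
  assumes "is_substitution \<tau>" "generator \<tau> (v, u, w)" "generator \<tau> (v, u @ s, w')"
  shows "(right_ext \<tau> ^^ length s) (v, u, w) = (v, u @ s, w')"
  using assms(2,3)
proof (induction s arbitrary: u w)
  case Nil
  then show ?case
    by (simp add: generator_def)
next
  case (Cons c s)
  have "subst_word \<tau> u = v @ u @ w" "subst_word \<tau> (u @ c # s) = v @ u @ c # s @ w'"
    using Cons.prems by (simp_all add: generator_def)
  then have "w @ subst_word \<tau> (c # s) = c # s @ w'"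
    by simp
  moreover have "w \<noteq> []"
    using Cons.prems(1) by (simp add: generator_def)
  ultimately obtain w0 where w: "w = c # w0"
    by (cases w) auto
  have "generator \<tau> (v, u @ [c], w0 @ \<tau> c)"
    using generator_right_ext[OF assms(1) Cons.prems(1)] w by simp
  moreover have "generator \<tau> (v, (u @ [c]) @ s, w')"
    using Cons.prems(2) by simp
  ultimately have "(right_ext \<tau> ^^ length s) (v, u @ [c], w0 @ \<tau> c) = (v, (u @ [c]) @ s, w')"
    by (rule Cons.IH)
  then show ?case
    using w by (simp add: funpow_swap1)
qed

lemma subst_word_center_append_neq:
  assumes "is_substitution \<tau>" "generator \<tau> (v, u, w)"
  shows "subst_word \<tau> (u @ t) @ v' \<noteq> v @ u @ t"
proof
  assume "subst_word \<tau> (u @ t) @ v' = v @ u @ t"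
  with assms(2) have "w @ subst_word \<tau> t @ v' = t"
    by (simp add: generator_def)
  then have "length w + length (subst_word \<tau> t) \<le> length t"
    by (metis le_add1 length_append add.assoc)
  moreover have "length t \<le> length (subst_word \<tau> t)"
    using assms(1) by (rule length_subst_word_ge)
  moreover have "0 < length w"
    using assms(2) by (simp add: generator_def)
  ultimately show False
    by linarith
qed

lemma generator_from_overlap:
  assumes "generator \<tau> (v1, z @ y, w1)" "generator \<tau> (v2, x @ z, w2)"
    "subst_word \<tau> x @ v1 = v2 @ x" "z \<noteq> []"
  shows "generator \<tau> (v1, z, w2)"
proof -
  have "subst_word \<tau> x @ subst_word \<tau> z = subst_word \<tau> x @ v1 @ z @ w2"
    using assms(2,3) by (simp add: generator_def flip: assms(3))
  then have "subst_word \<tau> z = v1 @ z @ w2"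
    by simp
  moreover have "z \<in> lang \<tau>"
    using assms(1) lang_factor_closed unfolding generator_def is_factor_def by fastforce
  ultimately show ?thesis
    using assms(1,2,4) by (simp add: generator_def)
qed

lemma basic_left_right_funpow_eq_imp_0:
  assumes "is_substitution \<tau>" "basic \<tau> b1" "generator \<tau> b2"
    and meet: "(left_ext \<tau> ^^ m) b1 = (right_ext \<tau> ^^ m) b2"
  shows "m = 0"
proof (rule ccontr)
  assume "m \<noteq> 0"
  obtain v1 u1 w1 v2 u2 w2 where b: "b1 = (v1, u1, w1)" "b2 = (v2, u2, w2)"
    by (cases b1, cases b2)
  have g1: "generator \<tau> (v1, u1, w1)" and g2: "generator \<tau> (v2, u2, w2)"
    using assms(2,3) b by (simp_all add: basic_def)
  obtain V x where L: "(left_ext \<tau> ^^ m) b1 = (V, x @ u1, w1)"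
    "subst_word \<tau> x @ v1 = V @ x" "length x = m"
    using left_ext_funpow_shape[OF assms(1) g1] b by blast
  obtain y W where R: "(right_ext \<tau> ^^ m) b2 = (v2, u2 @ y, W)" "length y = m"
    using right_ext_funpow_shape b by blast
  have x: "subst_word \<tau> x @ v1 = v2 @ x" and centers: "x @ u1 = u2 @ y" and "w1 = W"
    using meet L R by auto
  have not_prefix: "x \<noteq> u2 @ t" for t
    using subst_word_center_append_neq[OF assms(1) g2, of t v1] x by auto
  from centers obtain z where "x = u2 @ z \<or> x @ z = u2 \<and> u1 = z @ y"
    by (auto simp: append_eq_append_conv2)
  with not_prefix have u2: "u2 = x @ z" and u1: "u1 = z @ y"
    by auto
  have "z \<noteq> []"
    using not_prefix[of "[]"] u2 by auto
  from g1 u1 g2 u2 x \<open>z \<noteq> []\<close> have g0: "generator \<tau> (v1, z, w2)"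
    by (auto intro: generator_from_overlap)
  then have "(right_ext \<tau> ^^ m) (v1, z, w2) = b1"
    using right_ext_funpow_reaches[OF assms(1) g0, of y w1] g1 u1 b R(2) by simp
  then have "extend \<tau> 0 0 b1 = extend \<tau> 0 m (v1, z, w2)"
    by (simp add: extend_def)
  then have "G_related \<tau> b1 (v1, z, w2)"
    using G_related_iff_extend[OF assms(1)] g0 g1 b by blast
  moreover have "gen_length (v1, z, w2) < gen_length b1"
    using b u1 R(2) \<open>m \<noteq> 0\<close> by (simp add: gen_length_def)
  ultimately show False
    using assms(2) by (auto simp: basic_def)
qed

lemma basic_eq_if_extend_eq:
  assumes "is_substitution \<tau>" "basic \<tau> b1" "generator \<tau> b2"
    and "gen_length b1 = gen_length b2" "extend \<tau> i j b1 = extend \<tau> k l b2" "k \<le> i"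
  shows "b1 = b2"
proof -
  have g1: "generator \<tau> b1"
    using assms(2) by (simp add: basic_def)
  have "i + j = k + l"
    using arg_cong[OF assms(5), of gen_length] assms(4) by (simp add: gen_length_extend)
  define m where "m = i - k"
  with assms(6) \<open>i + j = k + l\<close> have "i = m + k" "l = m + j"
    by simp_all
  with assms(5) have "extend \<tau> (m + k) (0 + j) b1 = extend \<tau> (0 + k) (m + j) b2"
    by simp
  then have meet: "extend \<tau> m 0 b1 = extend \<tau> 0 m b2"
    by (rule extend_cancel[OF assms(1) g1 assms(3)])
  then have "(left_ext \<tau> ^^ m) b1 = (right_ext \<tau> ^^ m) b2"
    by (simp add: extend_def)
  then have "m = 0"
    by (rule basic_left_right_funpow_eq_imp_0[OF assms(1-3)])
  with meet show ?thesis
    by simp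
qed

lemma basic_G_related_eq:
  assumes "is_substitution \<tau>" "basic \<tau> b1" "basic \<tau> b2" "G_related \<tau> b1 b2"
  shows "b1 = b2"
proof -
  have "\<not> gen_length b2 < gen_length b1" "\<not> gen_length b1 < gen_length b2"
    using assms(2-4) G_related_sym unfolding basic_def by blast+
  then have len: "gen_length b1 = gen_length b2"
    by simp
  obtain i j k l where eq: "extend \<tau> i j b1 = extend \<tau> k l b2"
    using assms(1,4) by (auto simp: G_related_iff_extend)
  have g: "generator \<tau> b1" "generator \<tau> b2"
    using assms(2,3) by (simp_all add: basic_def)
  show ?thesis
  proof (cases "k \<le> i")
    case True
    then show ?thesis
      using basic_eq_if_extend_eq[OF assms(1,2) g(2) len eq] by blast
  next
    case False
    then show ?thesis
      using basic_eq_if_extend_eq[OF assms(1,3) g(1) len[symmetric] eq[symmetric]] by simp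
  qed
qed

lemma ex_basic_G_related:
  assumes "is_substitution \<tau>" "generator \<tau> g"
  shows "\<exists>b. basic \<tau> b \<and> G_related \<tau> g b"
proof -
  obtain b where b: "G_related \<tau> g b"
    and least: "\<And>h. G_related \<tau> g h \<Longrightarrow> gen_length b \<le> gen_length h"
    using ex_has_least_nat[of "G_related \<tau> g" g gen_length] G_related_refl[OF assms(2)] by blast
  have "generator \<tau> b"
    using b by (simp add: G_related_def)
  moreover have "gen_length b \<le> gen_length h" if "G_related \<tau> b h" for h
    using least G_related_trans[OF assms(1) b that] .
  ultimately have "basic \<tau> b"
    unfolding basic_def by (auto simp: not_less)
  with b show ?thesis
    by blast
qed

theorem mainTheorem4:
  fixes \<tau> :: "'a::finite \<Rightarrow> 'a list"
  assumes "is_substitution \<tau>"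
  shows "(\<forall>g1 g2. basic \<tau> g1 \<and> basic \<tau> g2 \<and> g1 \<noteq> g2 \<longrightarrow> \<not> G_related \<tau> g1 g2)
       \<and> (\<forall>g. generator \<tau> g \<longrightarrow> (\<exists>!b. basic \<tau> b \<and> G_related \<tau> g b))"
proof (intro conjI allI impI)
  fix g1 g2
  assume "basic \<tau> g1 \<and> basic \<tau> g2 \<and> g1 \<noteq> g2"
  then show "\<not> G_related \<tau> g1 g2"
    using basic_G_related_eq[OF assms] by blast
next
  fix g
  assume "generator \<tau> g"
  then obtain b where b: "basic \<tau> b" "G_related \<tau> g b"
    using ex_basic_G_related[OF assms] by blast
  moreover have "b' = b" if "basic \<tau> b'" "G_related \<tau> g b'" for b'
    using G_related_trans[OF assms G_related_sym[OF that(2)] b(2)]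
    by (rule basic_G_related_eq[OF assms that(1) b(1)])
  ultimately show "\<exists>!b. basic \<tau> b \<and> G_related \<tau> g b"
    by blast
qed

end
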